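(* For every $n\ge 3$, the graph $C_n\times K_2$ is a cubic admissible graph.
   Context: $C_n\times K_2$ is the cartesian product of the cycle of order $n$ with $K_2$ (the prism on $2n$ vertices). A trail is a walk with no repeated edge; its length is its number of edges, and it spans a graph if it contains every vertex. $t(L)$ denotes the length of a longest trail in $L$. A (multi)graph $L$ is admissible if (A-1) $t(L)<|E(L)|$, and (A-2) for each vertex $v\in V(L)$ and each edge $e$ incident with $v$, there is a trail of length $t(L)$ beginning $v,e,\ldots$ which spans $L$. *)

theory Defs
  imports Main
begin

text \<open>Graphs are given by a vertex set V and a set E of edges, each edge being a
  2-element set of vertices (simple graphs suffice: the prism is simple).\<close>

definition walk_edges :: "'v list \<Rightarrow> 'v set list" where
  "walk_edges vs = map (\<lambda>(a, b). {a, b}) (zip vs (tl vs))"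

definition is_trail :: "'v set \<Rightarrow> 'v set set \<Rightarrow> 'v list \<Rightarrow> bool" where
  "is_trail V E vs \<longleftrightarrow> vs \<noteq> [] \<and> set vs \<subseteq> V \<and> set (walk_edges vs) \<subseteq> E
      \<and> distinct (walk_edges vs)"

definition trail_length :: "'v list \<Rightarrow> nat" where
  "trail_length vs = length vs - 1"

definition longest_trail :: "'v set \<Rightarrow> 'v set set \<Rightarrow> nat" where
  "longest_trail V E = Max {trail_length vs | vs. is_trail V E vs}"

definition admissible :: "'v set \<Rightarrow> 'v set set \<Rightarrow> bool" where
  "admissible V E \<longleftrightarrow>
     longest_trail V E < card E \<and>
     (\<forall>v\<in>V. \<forall>e\<in>E. v \<in> e \<longrightarrow>
        (\<exists>vs. is_trail V E vs \<and> trail_length vs = longest_trail V E \<and>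
              length vs \<ge> 2 \<and> hd vs = v \<and> hd (walk_edges vs) = e \<and> set vs = V))"

definition cubic :: "'v set \<Rightarrow> 'v set set \<Rightarrow> bool" where
  "cubic V E \<longleftrightarrow> (\<forall>v\<in>V. card {e \<in> E. v \<in> e} = 3)"

definition prism_verts :: "nat \<Rightarrow> (nat \<times> bool) set" where
  "prism_verts n = {0..<n} \<times> UNIV"

definition prism_edges :: "nat \<Rightarrow> (nat \<times> bool) set set" where
  "prism_edges n =
     {{(i, b), (Suc i mod n, b)} | i b. i < n} \<union> {{(i, False), (i, True)} | i. i < n}"

end

theory Submission
  imports Defs "HOL-Number_Theory.Cong"
begin

text \<open>In a loopless graph of maximum degree three a trail meets every vertex at most once in its
  interior, since a second interior visit would use four distinct edges at that vertex. So a trail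
  of the prism has at most \<open>2 n + 1\<close> edges, fewer than its \<open>3 n\<close> edges. Two explicit spanning
  trails of length \<open>2 n + 1\<close> leave \<open>(0, False)\<close>, one along the rung and one along the cycle;
  their images under the rotations, the exchange of the two layers and the reflection of the prism
  start with every vertex and every edge at it.\<close>

section \<open>Degrees and trails\<close>

lemma sum_degree_eq_sum_card:
  assumes "finite V" "finite E" "\<And>e. e \<in> E \<Longrightarrow> e \<subseteq> V"
  shows "(\<Sum>v\<in>V. card {e \<in> E. v \<in> e}) = (\<Sum>e\<in>E. card e)"
proof -
  have "(\<Sum>v\<in>V. card {e \<in> E. v \<in> e}) = (\<Sum>v\<in>V. \<Sum>e\<in>E. of_bool (v \<in> e))"
    using assms(2) by (simp add: Collect_conj_eq Int_commute)
  also have "\<dots> = (\<Sum>e\<in>E. \<Sum>v\<in>V. of_bool (v \<in> e))"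
    by (rule sum.swap)
  also have "\<dots> = (\<Sum>e\<in>E. card e)"
    using assms by (intro sum.cong) (auto simp: Int_absorb1 simp flip: Int_def)
  finally show ?thesis .
qed

lemma walk_edges_length: "length (walk_edges vs) = length vs - 1"
  by (simp add: walk_edges_def)

lemma walk_edges_nth: "j < length vs - 1 \<Longrightarrow> walk_edges vs ! j = {vs ! j, vs ! Suc j}"
  by (simp add: walk_edges_def nth_tl)

lemma walk_edges_map: "walk_edges (map f vs) = map (image f) (walk_edges vs)"
  by (rule nth_equalityI) (auto simp: walk_edges_length walk_edges_nth)

lemma walk_edges_map_upt:
  "walk_edges (map f [0..<Suc m]) = map (\<lambda>j. {f j, f (Suc j)}) [0..<m]"
  by (rule nth_equalityI) (auto simp: walk_edges_length walk_edges_nth nth_append simp del: upt_Suc)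

lemma hd_walk_edges: "length vs \<ge> 2 \<Longrightarrow> hd (walk_edges vs) = {vs ! 0, vs ! 1}"
  by (cases vs; cases "tl vs") (auto simp: walk_edges_def)

lemma walk_edge_subset: "e \<in> set (walk_edges vs) \<Longrightarrow> e \<subseteq> set vs"
  by (cases vs) (auto simp: walk_edges_def dest: set_zip_leftD set_zip_rightD)

lemma is_trail_map_upt:
  assumes "\<And>j. j < m \<Longrightarrow> {f j, f (Suc j)} \<in> E"
    and "\<And>i j. i < j \<Longrightarrow> j < m \<Longrightarrow> {f i, f (Suc i)} \<noteq> {f j, f (Suc j)}"
    and "f ` {0..m} \<subseteq> V"
  shows "is_trail V E (map f [0..<Suc m])"
  unfolding is_trail_def walk_edges_map_upt
proof (intro conjI)
  show "distinct (map (\<lambda>j. {f j, f (Suc j)}) [0..<m])"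
    unfolding distinct_conv_nth using assms(2) by (auto simp: nat_neq_iff)
qed (use assms(1,3) in \<open>auto simp del: upt_Suc\<close>)

lemma distinct_trail_interior:
  assumes no_loop: "\<And>v. {v} \<notin> E" and degree: "\<And>v. v \<in> V \<Longrightarrow> card {e \<in> E. v \<in> e} \<le> 3"
    and "finite E" and trail: "is_trail V E vs"
  shows "distinct (butlast (tl vs))"
proof -
  let ?W = "walk_edges vs"
  have W: "?W ! j = {vs ! j, vs ! Suc j}" "?W ! j \<in> E" if "j < length vs - 1" for j
    using that trail walk_edges_nth[OF that] nth_mem[of j ?W] by (auto simp: is_trail_def walk_edges_length)
  have "distinct ?W" and "set vs \<subseteq> V"
    using trail by (auto simp: is_trail_def)
  have interior_ne: "vs ! Suc i \<noteq> vs ! Suc j" if ij: "i < j" "j < length vs - 2" for i j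
  proof
    assume eq: "vs ! Suc i = vs ! Suc j"
    show False
    proof (cases "j = Suc i")
      case True
      have "Suc i < length vs - 1" using ij by simp
      from W[OF this] show False using \<open>j = Suc i\<close> eq no_loop by auto
    next
      case False
      let ?v = "vs ! Suc i"
      let ?F = "{?W ! i, ?W ! Suc i, ?W ! j, ?W ! Suc j}"
      have "?F \<subseteq> {e \<in> E. ?v \<in> e}"
        using W[of i] W[of "Suc i"] W[of j] W[of "Suc j"] ij eq by auto
      then have "card ?F \<le> card {e \<in> E. ?v \<in> e}"
        using \<open>finite E\<close> by (intro card_mono) auto
      moreover have "card ?F = 4"
        using \<open>distinct ?W\<close> ij False by (auto simp: nth_eq_iff_index_eq walk_edges_length)
      moreover have "?v \<in> V" using \<open>set vs \<subseteq> V\<close> ij by auto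
      ultimately show False using degree by fastforce
    qed
  qed
  show ?thesis
    unfolding distinct_conv_nth
    using interior_ne by (auto simp: nth_butlast nth_tl) (metis nat_neq_iff numeral_2_eq_2)
qed

lemma trail_length_le_card_Suc:
  assumes "finite V" "finite E" "\<And>v. {v} \<notin> E" "\<And>v. v \<in> V \<Longrightarrow> card {e \<in> E. v \<in> e} \<le> 3"
    and trail: "is_trail V E vs"
  shows "trail_length vs \<le> card V + 1"
proof -
  have "length vs - 2 = card (set (butlast (tl vs)))"
    using distinct_trail_interior[OF assms(3,4,2) trail] by (simp add: distinct_card)
  also have "\<dots> \<le> card V"
    using trail \<open>finite V\<close>
    by (intro card_mono) (auto simp: is_trail_def dest!: in_set_butlastD list.set_sel(2)[rotated])
  finally show ?thesis by (simp add: trail_length_def)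
qed

lemma longest_trail_eqI:
  assumes "\<And>ws. is_trail V E ws \<Longrightarrow> trail_length ws \<le> t"
    and "is_trail V E vs" "trail_length vs = t"
  shows "longest_trail V E = t"
  unfolding longest_trail_def
proof (rule Max_eqI)
  show "finite {trail_length vs |vs. is_trail V E vs}"
    by (rule finite_subset[of _ "{..t}"]) (auto dest: assms(1))
qed (use assms in auto)

definition spanning_trail_from :: "'v set \<Rightarrow> 'v set set \<Rightarrow> nat \<Rightarrow> 'v \<Rightarrow> 'v set \<Rightarrow> 'v list \<Rightarrow> bool" where
  "spanning_trail_from V E t v e vs \<longleftrightarrow> is_trail V E vs \<and> trail_length vs = t \<and> length vs \<ge> 2
     \<and> hd vs = v \<and> hd (walk_edges vs) = e \<and> set vs = V"

lemma spanning_trail_from_map_upt: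
  assumes "\<And>j. j < m \<Longrightarrow> {f j, f (Suc j)} \<in> E"
    and "\<And>i j. i < j \<Longrightarrow> j < m \<Longrightarrow> {f i, f (Suc i)} \<noteq> {f j, f (Suc j)}"
    and "f ` {0..m} = V" "m \<ge> 1"
  shows "spanning_trail_from V E m (f 0) {f 0, f 1} (map f [0..<Suc m])"
proof -
  have "set (map f [0..<Suc m]) = V"
    using assms(3) by (simp add: atLeastLessThanSuc_atLeastAtMost del: upt_Suc)
  moreover have "is_trail V E (map f [0..<Suc m])"
    using assms by (intro is_trail_map_upt) auto
  ultimately show ?thesis
    using \<open>m \<ge> 1\<close> by (auto simp: spanning_trail_from_def trail_length_def hd_walk_edges hd_map
        nth_Cons' simp del: upt_Suc)
qed

lemma spanning_trail_from_image:
  assumes "finite V" "inj_on \<phi> V" "\<phi> ` V \<subseteq> V" "\<And>e. e \<in> E \<Longrightarrow> \<phi> ` e \<in> E"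
    and "spanning_trail_from V E t v e vs"
  shows "spanning_trail_from V E t (\<phi> v) (\<phi> ` e) (map \<phi> vs)"
proof -
  have trail: "is_trail V E vs" and "length vs \<ge> 2" "set vs = V"
    using assms(5) by (auto simp: spanning_trail_from_def)
  have "inj_on (image \<phi>) (set (walk_edges vs))"
    using inj_on_image_Pow[OF assms(2)] walk_edge_subset \<open>set vs = V\<close>
    by (blast intro: inj_on_subset)
  then have "is_trail V E (map \<phi> vs)"
    using trail assms(3,4) \<open>set vs = V\<close> by (auto simp: is_trail_def walk_edges_map distinct_map)
  moreover have "\<phi> ` V = V"
    using endo_inj_surj assms(1-3) by blast
  ultimately show ?thesis
    using assms(5) \<open>length vs \<ge> 2\<close>
    by (cases vs; cases "tl vs") (auto simp: spanning_trail_from_def trail_length_def hd_walk_edges)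
qed

lemma admissible_iff_spanning_trail_from:
  "admissible V E \<longleftrightarrow> longest_trail V E < card E \<and>
     (\<forall>v\<in>V. \<forall>e\<in>E. v \<in> e \<longrightarrow> (\<exists>vs. spanning_trail_from V E (longest_trail V E) v e vs))"
  by (simp add: admissible_def spanning_trail_from_def)

section \<open>The prism\<close>

definition cycle_pred :: "nat \<Rightarrow> nat \<Rightarrow> nat" where
  "cycle_pred n k = (if k = 0 then n - 1 else k - 1)"

lemma mem_prism_edges:
  "e \<in> prism_edges n \<longleftrightarrow>
     (\<exists>i b. i < n \<and> e = {(i, b), (Suc i mod n, b)}) \<or> (\<exists>i. i < n \<and> e = {(i, False), (i, True)})"
  unfolding prism_edges_def by blast

lemma prism_cycle_edge: "i < n \<Longrightarrow> {(i, b), (Suc i mod n, b)} \<in> prism_edges n"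
  unfolding mem_prism_edges by blast

lemma prism_rung_edge: "i < n \<Longrightarrow> {(i, False), (i, True)} \<in> prism_edges n"
  unfolding mem_prism_edges by blast

lemma finite_prism_verts: "finite (prism_verts n)"
  by (simp add: prism_verts_def)

lemma card_prism_verts: "card (prism_verts n) = 2 * n"
  by (simp add: prism_verts_def card_cartesian_product)

lemma finite_prism_edges: "finite (prism_edges n)"
proof -
  have "prism_edges n = (\<lambda>(i, b). {(i, b), (Suc i mod n, b)}) ` ({..<n} \<times> UNIV)
      \<union> (\<lambda>i. {(i, False), (i, True)}) ` {..<n}"
    unfolding prism_edges_def by auto
  then show ?thesis by simp
qed

lemma prism_edge_subset_verts: "e \<in> prism_edges n \<Longrightarrow> e \<subseteq> prism_verts n"
  by (auto simp: mem_prism_edges prism_verts_def)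

lemma card_prism_edge: "n \<ge> 2 \<Longrightarrow> e \<in> prism_edges n \<Longrightarrow> card e = 2"
  by (auto simp: mem_prism_edges mod_Suc)

lemma singleton_notin_prism_edges: "n \<ge> 2 \<Longrightarrow> {v} \<notin> prism_edges n"
  using card_prism_edge by fastforce

lemma prism_incident_edges:
  assumes "k < n"
  shows "{e \<in> prism_edges n. (k, b) \<in> e} =
    {{(k, False), (k, True)}, {(k, b), (Suc k mod n, b)}, {(cycle_pred n k, b), (k, b)}}"
proof (intro equalityI subsetI)
  fix e assume "e \<in> {e \<in> prism_edges n. (k, b) \<in> e}"
  then have e: "e \<in> prism_edges n" "(k, b) \<in> e" by auto
  from e(1) consider i c where "i < n" "e = {(i, c), (Suc i mod n, c)}"
    | i where "i < n" "e = {(i, False), (i, True)}"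
    unfolding mem_prism_edges by blast
  then show "e \<in> {{(k, False), (k, True)}, {(k, b), (Suc k mod n, b)}, {(cycle_pred n k, b), (k, b)}}"
  proof cases
    case 1
    with e(2) have "c = b" "k = i \<or> k = Suc i mod n" by auto
    moreover have "k = Suc i mod n \<Longrightarrow> i = cycle_pred n k"
      using 1 assms by (cases "Suc i = n") (auto simp: cycle_pred_def)
    ultimately show ?thesis using 1 by auto
  next
    case 2
    then show ?thesis using e(2) by (cases b) auto
  qed
next
  fix e assume "e \<in> {{(k, False), (k, True)}, {(k, b), (Suc k mod n, b)}, {(cycle_pred n k, b), (k, b)}}"
  moreover have "cycle_pred n k < n" "Suc (cycle_pred n k) mod n = k"
    using assms by (auto simp: cycle_pred_def)
  ultimately show "e \<in> {e \<in> prism_edges n. (k, b) \<in> e}"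
    using prism_cycle_edge[of k n b] prism_cycle_edge[of "cycle_pred n k" n b] prism_rung_edge[of k n] assms
    by auto
qed

lemma cubic_prism: "n \<ge> 3 \<Longrightarrow> cubic (prism_verts n) (prism_edges n)"
  unfolding cubic_def prism_verts_def
  by (auto simp: prism_incident_edges doubleton_eq_iff cycle_pred_def mod_Suc split: if_splits)

lemma card_prism_edges:
  assumes "n \<ge> 3"
  shows "card (prism_edges n) = 3 * n"
proof -
  have "(\<Sum>v\<in>prism_verts n. card {e \<in> prism_edges n. v \<in> e}) = (\<Sum>e\<in>prism_edges n. card e)"
    by (intro sum_degree_eq_sum_card finite_prism_verts finite_prism_edges prism_edge_subset_verts)
  moreover have "(\<Sum>v\<in>prism_verts n. card {e \<in> prism_edges n. v \<in> e}) = 3 * (2 * n)"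
    using cubic_prism[OF assms] by (simp add: cubic_def card_prism_verts)
  moreover have "(\<Sum>e\<in>prism_edges n. card e) = (\<Sum>e\<in>prism_edges n. 2)"
    using assms by (intro sum.cong refl card_prism_edge) auto
  ultimately show ?thesis by simp
qed

lemma trail_length_le_prism:
  "n \<ge> 3 \<Longrightarrow> is_trail (prism_verts n) (prism_edges n) vs \<Longrightarrow> trail_length vs \<le> 2 * n + 1"
  using trail_length_le_card_Suc[of "prism_verts n" "prism_edges n" vs] cubic_prism[of n]
  by (simp add: cubic_def card_prism_verts finite_prism_verts finite_prism_edges
      singleton_notin_prism_edges)

lemma prism_edge_Suc: "Suc i < n \<Longrightarrow> {(i, b), (Suc i, b)} \<in> prism_edges n"
  using prism_cycle_edge[of i n b] by simp

lemma prism_edge_last: "0 < n \<Longrightarrow> {(0, b), (n - 1, b)} \<in> prism_edges n"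
  using prism_cycle_edge[of "n - 1" n b] by (simp add: insert_commute)

text \<open>Up the rung at 0, along the top cycle to \<open>n - 1\<close>, down the rung, back along the bottom
  cycle to 0, and across the bottom edge from 0 to \<open>n - 1\<close> once more.\<close>
definition rung_first_trail :: "nat \<Rightarrow> nat \<Rightarrow> nat \<times> bool" where
  "rung_first_trail n j = (if j = 0 then (0, False) else if j \<le> n then (j - 1, True)
     else if j \<le> 2 * n then (2 * n - j, False) else (n - 1, False))"

text \<open>Along the bottom cycle from 0 to \<open>n - 1\<close>, up the rung, back along the top cycle to 0,
  down the rung at 0, and across the bottom edge from 0 to \<open>n - 1\<close>.\<close>
definition cycle_first_trail :: "nat \<Rightarrow> nat \<Rightarrow> nat \<times> bool" where
  "cycle_first_trail n j = (if j < n then (j, False) else if j < 2 * n then (2 * n - 1 - j, True)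
     else if j = 2 * n then (0, False) else (n - 1, False))"

lemma rung_first_trail_edge:
  assumes "n \<ge> 3" "j < 2 * n + 1"
  shows "{rung_first_trail n j, rung_first_trail n (Suc j)} \<in> prism_edges n"
proof -
  consider "j = 0" | "0 < j" "j < n" | "j = n" | "n < j" "j < 2 * n" | "j = 2 * n"
    using assms by linarith
  then show ?thesis
  proof cases
    case 2
    then show ?thesis using prism_edge_Suc[of "j - 1" n True] by (simp add: rung_first_trail_def)
  next
    case 4
    then show ?thesis using prism_edge_Suc[of "2 * n - Suc j" n False]
      by (simp add: rung_first_trail_def Suc_diff_Suc insert_commute)
  qed (use assms prism_rung_edge[of 0 n] prism_rung_edge[of "n - 1" n] prism_edge_last[of n False] in
      \<open>auto simp: rung_first_trail_def insert_commute\<close>)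
qed

lemma cycle_first_trail_edge:
  assumes "n \<ge> 3" "j < 2 * n + 1"
  shows "{cycle_first_trail n j, cycle_first_trail n (Suc j)} \<in> prism_edges n"
proof -
  consider "Suc j < n" | "Suc j = n" | "n \<le> j" "Suc j < 2 * n" | "Suc j = 2 * n" | "j = 2 * n"
    using assms by linarith
  then show ?thesis
  proof cases
    case 1
    then show ?thesis using prism_edge_Suc[of j n False] by (simp add: cycle_first_trail_def)
  next
    case 2
    then have "n - 1 = j" by simp
    then show ?thesis using 2 prism_rung_edge[of j n] by (simp add: cycle_first_trail_def)
  next
    case 3
    then show ?thesis using prism_edge_Suc[of "2 * n - 2 - j" n True]
      by (simp add: cycle_first_trail_def Suc_diff_Suc numeral_2_eq_2 insert_commute)
  qed (use assms prism_rung_edge[of 0 n] prism_edge_last[of n False] in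
      \<open>auto simp: cycle_first_trail_def insert_commute\<close>)
qed

lemma rung_first_trail_distinct_edges:
  "n \<ge> 3 \<Longrightarrow> i < j \<Longrightarrow> j < 2 * n + 1 \<Longrightarrow>
    {rung_first_trail n i, rung_first_trail n (Suc i)} \<noteq> {rung_first_trail n j, rung_first_trail n (Suc j)}"
  unfolding rung_first_trail_def by (auto simp: doubleton_eq_iff split: if_splits)

lemma cycle_first_trail_distinct_edges:
  "n \<ge> 3 \<Longrightarrow> i < j \<Longrightarrow> j < 2 * n + 1 \<Longrightarrow>
    {cycle_first_trail n i, cycle_first_trail n (Suc i)} \<noteq> {cycle_first_trail n j, cycle_first_trail n (Suc j)}"
  unfolding cycle_first_trail_def by (auto simp: doubleton_eq_iff split: if_splits)

lemma rung_first_trail_image: "n \<ge> 3 \<Longrightarrow> rung_first_trail n ` {0..2 * n + 1} = prism_verts n"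
proof (intro equalityI subsetI)
  fix v assume "n \<ge> 3" "v \<in> prism_verts n"
  then obtain i b where "v = (i, b)" "i < n" by (auto simp: prism_verts_def)
  then have "v = rung_first_trail n (if b then Suc i else 2 * n - i)"
    by (auto simp: rung_first_trail_def)
  then show "v \<in> rung_first_trail n ` {0..2 * n + 1}"
    by (rule image_eqI) (use \<open>i < n\<close> in auto)
qed (auto simp: rung_first_trail_def prism_verts_def)

lemma cycle_first_trail_image: "n \<ge> 3 \<Longrightarrow> cycle_first_trail n ` {0..2 * n + 1} = prism_verts n"
proof (intro equalityI subsetI)
  fix v assume "n \<ge> 3" "v \<in> prism_verts n"
  then obtain i b where "v = (i, b)" "i < n" by (auto simp: prism_verts_def)
  then have "v = cycle_first_trail n (if b then 2 * n - 1 - i else i)"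
    by (auto simp: cycle_first_trail_def)
  then show "v \<in> cycle_first_trail n ` {0..2 * n + 1}"
    by (rule image_eqI) (use \<open>i < n\<close> in auto)
qed (auto simp: cycle_first_trail_def prism_verts_def)

lemma spanning_trail_rung_first:
  assumes "n \<ge> 3"
  shows "spanning_trail_from (prism_verts n) (prism_edges n) (2 * n + 1) (0, False)
    {(0, False), (0, True)} (map (rung_first_trail n) [0..<Suc (2 * n + 1)])"
  using spanning_trail_from_map_upt[OF rung_first_trail_edge rung_first_trail_distinct_edges
      rung_first_trail_image] assms
  by (simp add: rung_first_trail_def del: upt_Suc)

lemma spanning_trail_cycle_first:
  assumes "n \<ge> 3"
  shows "spanning_trail_from (prism_verts n) (prism_edges n) (2 * n + 1) (0, False)
    {(0, False), (1, False)} (map (cycle_first_trail n) [0..<Suc (2 * n + 1)])"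
  using spanning_trail_from_map_upt[OF cycle_first_trail_edge cycle_first_trail_distinct_edges
      cycle_first_trail_image] assms
  by (simp add: cycle_first_trail_def del: upt_Suc)

definition prism_rotate :: "nat \<Rightarrow> nat \<Rightarrow> bool \<Rightarrow> nat \<times> bool \<Rightarrow> nat \<times> bool" where
  "prism_rotate n k b = (\<lambda>(i, c). ((i + k) mod n, c \<noteq> b))"

definition prism_reflect :: "nat \<Rightarrow> nat \<times> bool \<Rightarrow> nat \<times> bool" where
  "prism_reflect n = (\<lambda>(i, c). ((n - i) mod n, c))"

lemma inj_on_prism_rotate: "inj_on (prism_rotate n k b) (prism_verts n)"
proof (rule inj_onI)
  fix x y assume "x \<in> prism_verts n" "y \<in> prism_verts n" "prism_rotate n k b x = prism_rotate n k b y"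
  then obtain i c j d where xy: "x = (i, c)" "y = (j, d)" "i < n" "j < n"
    "[i + k = j + k] (mod n)" "(c \<noteq> b) = (d \<noteq> b)"
    by (cases x, cases y) (auto simp: prism_verts_def prism_rotate_def cong_def)
  then have "i = j"
    by (metis cong_add_rcancel_nat cong_def mod_less)
  then show "x = y" using xy by auto
qed

lemma prism_rotate_edge:
  assumes "e \<in> prism_edges n"
  shows "prism_rotate n k b ` e \<in> prism_edges n"
proof -
  from assms consider i c where "i < n" "e = {(i, c), (Suc i mod n, c)}"
    | i where "i < n" "e = {(i, False), (i, True)}"
    unfolding mem_prism_edges by blast
  then show ?thesis
  proof cases
    case 1
    have "(Suc i mod n + k) mod n = Suc ((i + k) mod n) mod n" by (simp add: mod_simps)
    then have "prism_rotate n k b ` e = {((i + k) mod n, c \<noteq> b), (Suc ((i + k) mod n) mod n, c \<noteq> b)}"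
      using 1 by (simp add: prism_rotate_def)
    then show ?thesis using prism_cycle_edge[of "(i + k) mod n" n] 1 by simp
  next
    case 2
    then have "prism_rotate n k b ` e = {((i + k) mod n, False), ((i + k) mod n, True)}"
      by (cases b) (auto simp: prism_rotate_def)
    then show ?thesis using prism_rung_edge[of "(i + k) mod n" n] 2 by simp
  qed
qed

lemma inj_on_prism_reflect: "inj_on (prism_reflect n) (prism_verts n)"
  by (rule inj_onI) (auto simp: prism_verts_def prism_reflect_def mod_if split: if_splits)

lemma prism_reflect_edge:
  assumes "e \<in> prism_edges n"
  shows "prism_reflect n ` e \<in> prism_edges n"
proof -
  from assms consider i c where "i < n" "e = {(i, c), (Suc i mod n, c)}"
    | i where "i < n" "e = {(i, False), (i, True)}"
    unfolding mem_prism_edges by blast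
  then show ?thesis
  proof cases
    case 1
    define i' where "i' = (n - Suc i mod n) mod n"
    have "Suc i' mod n = (n - i) mod n"
      using 1(1) by (cases "Suc i = n") (auto simp: i'_def Suc_diff_Suc)
    then have "prism_reflect n ` e = {(i', c), (Suc i' mod n, c)}"
      using 1 by (auto simp: prism_reflect_def i'_def)
    moreover have "i' < n" using 1 by (simp add: i'_def)
    ultimately show ?thesis using prism_cycle_edge by simp
  next
    case 2
    then have "prism_reflect n ` e = {((n - i) mod n, False), ((n - i) mod n, True)}"
      by (auto simp: prism_reflect_def)
    then show ?thesis using prism_rung_edge[of "(n - i) mod n" n] 2 by simp
  qed
qed

lemma prism_spanning_trail_at_origin:
  assumes "n \<ge> 3" "x \<in> {(0, True), (1, False), (n - 1, False)}"
  shows "\<exists>vs. spanning_trail_from (prism_verts n) (prism_edges n) (2 * n + 1) (0, False) {(0, False), x} vs"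
proof -
  have reflected: "spanning_trail_from (prism_verts n) (prism_edges n) (2 * n + 1)
      (prism_reflect n (0, False)) (prism_reflect n ` {(0, False), (1, False)})
      (map (prism_reflect n) (map (cycle_first_trail n) [0..<Suc (2 * n + 1)]))"
    using assms(1)
    by (intro spanning_trail_from_image finite_prism_verts inj_on_prism_reflect prism_reflect_edge
        spanning_trail_cycle_first) (auto simp: prism_reflect_def prism_verts_def)
  have "prism_reflect n (0, False) = (0, False)"
    "prism_reflect n ` {(0, False), (1, False)} = {(0, False), (n - 1, False)}"
    using assms(1) by (auto simp: prism_reflect_def)
  then show ?thesis
    using assms spanning_trail_rung_first spanning_trail_cycle_first reflected by auto
qed

lemma prism_spanning_trail_exists:
  assumes "n \<ge> 3" "v \<in> prism_verts n" "e \<in> prism_edges n" "v \<in> e"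
  shows "\<exists>vs. spanning_trail_from (prism_verts n) (prism_edges n) (2 * n + 1) v e vs"
proof -
  obtain k b where v: "v = (k, b)" "k < n"
    using assms(2) by (auto simp: prism_verts_def)
  let ?\<rho> = "prism_rotate n k b"
  have "(n - 1 + k) mod n = cycle_pred n k"
    using v assms(1) by (auto simp: cycle_pred_def le_mod_geq)
  then have "?\<rho> ` {(0, False), (0, True)} = {(k, False), (k, True)}"
    "?\<rho> ` {(0, False), (1, False)} = {(k, b), (Suc k mod n, b)}"
    "?\<rho> ` {(0, False), (n - 1, False)} = {(cycle_pred n k, b), (k, b)}"
    using v by (cases b; simp add: prism_rotate_def mod_Suc insert_commute)+
  moreover have "e \<in> {{(k, False), (k, True)}, {(k, b), (Suc k mod n, b)}, {(cycle_pred n k, b), (k, b)}}"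
    using prism_incident_edges[OF v(2), of b] assms(3,4) v by blast
  ultimately have "e \<in> (\<lambda>x. ?\<rho> ` {(0, False), x}) ` {(0, True), (1, False), (n - 1, False)}"
    by simp
  then obtain x where x: "x \<in> {(0, True), (1, False), (n - 1, False)}" "e = ?\<rho> ` {(0, False), x}"
    by blast
  obtain vs where "spanning_trail_from (prism_verts n) (prism_edges n) (2 * n + 1) (0, False) {(0, False), x} vs"
    using prism_spanning_trail_at_origin[OF assms(1) x(1)] by blast
  then have "spanning_trail_from (prism_verts n) (prism_edges n) (2 * n + 1) (?\<rho> (0, False)) e (map ?\<rho> vs)"
    unfolding x(2) using assms(1)
    by (intro spanning_trail_from_image finite_prism_verts inj_on_prism_rotate prism_rotate_edge)
      (auto simp: prism_rotate_def prism_verts_def)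
  moreover have "?\<rho> (0, False) = v"
    using v by (simp add: prism_rotate_def)
  ultimately show ?thesis by auto
qed

lemma longest_trail_prism:
  assumes "n \<ge> 3"
  shows "longest_trail (prism_verts n) (prism_edges n) = 2 * n + 1"
  using spanning_trail_rung_first[OF assms] trail_length_le_prism[OF assms]
  by (intro longest_trail_eqI) (auto simp: spanning_trail_from_def)

theorem lemma2p7:
  fixes n :: nat
  assumes "n \<ge> 3"
  shows "cubic (prism_verts n) (prism_edges n) \<and> admissible (prism_verts n) (prism_edges n)"
proof
  show "cubic (prism_verts n) (prism_edges n)"
    using cubic_prism assms .
  show "admissible (prism_verts n) (prism_edges n)"
    unfolding admissible_iff_spanning_trail_from longest_trail_prism[OF assms]
    using prism_spanning_trail_exists[OF assms] assms by (simp add: card_prism_edges)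
qed

end
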